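(* Let $(U,\tau_R,\rho)$ be a general ordered topological approximation space and $A$ a non-empty finite subset of $U$. Then for every $j\in\{\alpha,P\}$ we have $\eta_{Inc}(A)\le\eta_{jInc}(A)$ and $\eta_{Dec}(A)\le\eta_{jDec}(A)$, where $$\eta_{Inc}(A)=\frac{|\underline{R}_{Inc}(A)|}{|\overline{R}^{Inc}(A)|},\quad \eta_{Dec}(A)=\frac{|\underline{R}_{Dec}(A)|}{|\overline{R}^{Dec}(A)|},\quad \eta_{jInc}(A)=\frac{|\underline{j}_{Inc}(A)|}{|\overline{j}^{Inc}(A)|},\quad \eta_{jDec}(A)=\frac{|\underline{j}_{Dec}(A)|}{|\overline{j}^{Dec}(A)|}.$$
   Context: A general ordered topological approximation space (GOTAS) is a triple $(U,\tau_R,\rho)$ where $U$ is a non-empty set, $R$ is a binary relation on $U$, $\tau_R$ is a topology on $U$ generated by $R$, and $\rho$ is a partial order on $U$. A subset $A\subseteq U$ is increasing (resp. decreasing) if whenever $a\in A$, $x\in U$ and $a\,\rho\,x$ (resp. $x\,\rho\,a$), then $x\in A$. For $A\subseteq U$: $\underline{R}_{Inc}(A)$ is the greatest subset of $A$ that is both $\tau_R$-open and increasing; $\underline{R}_{Dec}(A)$ is the greatest subset of $A$ that is $\tau_R$-open and decreasing; $\overline{R}^{Inc}(A)$ is the smallest superset of $A$ that is $\tau_R$-closed and increasing; $\overline{R}^{Dec}(A)$ is the smallest superset of $A$ that is $\tau_R$-closed and decreasing. With $D\in\{Inc,Dec\}$: $\underline{\alpha}_{D}(A)=A\cap\underline{R}_{D}(\overline{R}^{D}(\underline{R}_{D}(A)))$,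 $\overline{\alpha}^{D}(A)=A\cup\overline{R}^{D}(\underline{R}_{D}(\overline{R}^{D}(A)))$, $\underline{P}_{D}(A)=A\cap\underline{R}_{D}(\overline{R}^{D}(A))$, $\overline{P}^{D}(A)=A\cup\overline{R}^{D}(\underline{R}_{D}(A))$. $|X|$ denotes the cardinality of $X$. *)

theory Defs
  imports "HOL-Analysis.Analysis"
begin

definition is_increasing :: "'a set \<Rightarrow> 'a rel \<Rightarrow> 'a set \<Rightarrow> bool" where
  "is_increasing U \<rho> A \<longleftrightarrow> (\<forall>a\<in>A. \<forall>x\<in>U. (a, x) \<in> \<rho> \<longrightarrow> x \<in> A)"

definition is_decreasing :: "'a set \<Rightarrow> 'a rel \<Rightarrow> 'a set \<Rightarrow> bool" where
  "is_decreasing U \<rho> A \<longleftrightarrow> (\<forall>a\<in>A. \<forall>x\<in>U. (x, a) \<in> \<rho> \<longrightarrow> x \<in> A)"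

(* Generic lower / upper approximations; Q is the monotonicity predicate
   (is_increasing U rho or is_decreasing U rho). *)
definition lowR :: "'a topology \<Rightarrow> ('a set \<Rightarrow> bool) \<Rightarrow> 'a set \<Rightarrow> 'a set" where
  "lowR T Q A = (GREATEST G. G \<subseteq> A \<and> openin T G \<and> Q G)"

definition uppR :: "'a topology \<Rightarrow> ('a set \<Rightarrow> bool) \<Rightarrow> 'a set \<Rightarrow> 'a set" where
  "uppR T Q A = (LEAST F. A \<subseteq> F \<and> closedin T F \<and> Q F)"

definition lowAlpha :: "'a topology \<Rightarrow> ('a set \<Rightarrow> bool) \<Rightarrow> 'a set \<Rightarrow> 'a set" where
  "lowAlpha T Q A = A \<inter> lowR T Q (uppR T Q (lowR T Q A))"

definition uppAlpha :: "'a topology \<Rightarrow> ('a set \<Rightarrow> bool) \<Rightarrow> 'a set \<Rightarrow> 'a set" where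
  "uppAlpha T Q A = A \<union> uppR T Q (lowR T Q (uppR T Q A))"

definition lowP :: "'a topology \<Rightarrow> ('a set \<Rightarrow> bool) \<Rightarrow> 'a set \<Rightarrow> 'a set" where
  "lowP T Q A = A \<inter> lowR T Q (uppR T Q A)"

definition uppP :: "'a topology \<Rightarrow> ('a set \<Rightarrow> bool) \<Rightarrow> 'a set \<Rightarrow> 'a set" where
  "uppP T Q A = A \<union> uppR T Q (lowR T Q A)"

definition eta :: "('a set \<Rightarrow> 'a set) \<Rightarrow> ('a set \<Rightarrow> 'a set) \<Rightarrow> 'a set \<Rightarrow> real" where
  "eta low upp A = real (card (low A)) / real (card (upp A))"

end

theory Submission
  imports Defs
begin

text \<open>The lower approximation of A is an open set inside the closed upper
  approximation of A (and of the lower approximation of A), so it survives inside the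
  alpha- and P-lower approximations; dually the alpha- and P-upper approximations lie
  inside the upper approximation of A. Hence the refined approximations are sandwiched as
  low A \<subseteq> low' A \<subseteq> A \<subseteq> upp' A \<subseteq> upp A, and the accuracy ratio can only increase.
  Only the closure of the increasing (decreasing) sets under unions and nonempty
  intersections is needed, not that \<rho> is a partial order.\<close>

lemma eta_le_eta_if_nested:
  assumes "low A \<subseteq> low' A" "low' A \<subseteq> A" "A \<subseteq> upp' A" "upp' A \<subseteq> upp A"
    and "finite A" "A \<noteq> {}"
  shows "eta low upp A \<le> eta low' upp' A"
proof (cases "finite (upp A)")
  case False
  \<comment> \<open>then card (upp A) = 0 and the left-hand side is a division by zero, i.e. 0\<close>
  then show ?thesis by (simp add: eta_def)
next
  case True
  then have "finite (upp' A)" using assms(4) finite_subset by blast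
  have "0 < card A" using assms(5,6) by (simp add: card_gt_0_iff)
  also have "card A \<le> card (upp' A)" using card_mono[OF \<open>finite (upp' A)\<close> assms(3)] .
  finally have "0 < real (card (upp' A))" by simp
  moreover have "card (low A) \<le> card (low' A)"
    using card_mono[OF finite_subset[OF assms(2,5)] assms(1)] .
  moreover have "card (upp' A) \<le> card (upp A)" using card_mono[OF True assms(4)] .
  ultimately show ?thesis unfolding eta_def by (intro frac_le) auto
qed

locale union_inter_closed =
  fixes T :: "'a topology" and Q :: "'a set \<Rightarrow> bool"
  assumes Q_Union: "(\<And>S. S \<in> K \<Longrightarrow> Q S) \<Longrightarrow> Q (\<Union>K)"
    and Q_Inter: "K \<noteq> {} \<Longrightarrow> (\<And>S. S \<in> K \<Longrightarrow> Q S) \<Longrightarrow> Q (\<Inter>K)"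
    and Q_topspace: "Q (topspace T)"
begin

lemma lowR_eq_Union: "lowR T Q X = \<Union>{G. G \<subseteq> X \<and> openin T G \<and> Q G}"
  unfolding lowR_def by (rule Greatest_equality) (auto intro!: Q_Union)

lemma uppR_eq_Inter:
  assumes "X \<subseteq> topspace T"
  shows "uppR T Q X = \<Inter>{F. X \<subseteq> F \<and> closedin T F \<and> Q F}"
  unfolding uppR_def
proof (rule Least_equality)
  have "topspace T \<in> {F. X \<subseteq> F \<and> closedin T F \<and> Q F}"
    using assms Q_topspace by auto
  then show "X \<subseteq> \<Inter>{F. X \<subseteq> F \<and> closedin T F \<and> Q F} \<and>
      closedin T (\<Inter>{F. X \<subseteq> F \<and> closedin T F \<and> Q F}) \<and>
      Q (\<Inter>{F. X \<subseteq> F \<and> closedin T F \<and> Q F})"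
    by (auto intro!: Q_Inter closedin_Inter)
qed auto

lemma lowR_subset: "lowR T Q X \<subseteq> X"
  by (auto simp: lowR_eq_Union)

lemma lowR_greatest: "G \<subseteq> X \<Longrightarrow> openin T G \<Longrightarrow> Q G \<Longrightarrow> G \<subseteq> lowR T Q X"
  by (auto simp: lowR_eq_Union)

lemma openin_lowR: "openin T (lowR T Q X)"
  by (auto simp: lowR_eq_Union)

lemma lowR_subset_topspace: "lowR T Q X \<subseteq> topspace T"
  using openin_lowR openin_subset by blast

lemma Q_lowR: "Q (lowR T Q X)"
  by (auto simp: lowR_eq_Union intro!: Q_Union)

lemma uppR_superset: "X \<subseteq> topspace T \<Longrightarrow> X \<subseteq> uppR T Q X"
  by (auto simp: uppR_eq_Inter)

lemma uppR_least:
  "X \<subseteq> topspace T \<Longrightarrow> X \<subseteq> F \<Longrightarrow> closedin T F \<Longrightarrow> Q F \<Longrightarrow> uppR T Q X \<subseteq> F"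
  by (auto simp: uppR_eq_Inter)

lemma closedin_uppR_Q_uppR:
  assumes "X \<subseteq> topspace T"
  shows "closedin T (uppR T Q X) \<and> Q (uppR T Q X)"
proof -
  have "topspace T \<in> {F. X \<subseteq> F \<and> closedin T F \<and> Q F}"
    using assms Q_topspace by auto
  then show ?thesis
    using assms by (auto simp: uppR_eq_Inter intro!: Q_Inter closedin_Inter)
qed

lemma lowR_subset_lowR_uppR:
  assumes "Y \<subseteq> topspace T" "lowR T Q X \<subseteq> Y"
  shows "lowR T Q X \<subseteq> lowR T Q (uppR T Q Y)"
  using assms uppR_superset[OF assms(1)] openin_lowR Q_lowR
  by (intro lowR_greatest) auto

lemma uppR_lowR_subset_uppR:
  assumes "X \<subseteq> topspace T" "lowR T Q Y \<subseteq> uppR T Q X"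
  shows "uppR T Q (lowR T Q Y) \<subseteq> uppR T Q X"
  using assms closedin_uppR_Q_uppR[OF assms(1)] lowR_subset_topspace
  by (intro uppR_least) auto

lemma eta_lowR_uppR_le_eta_alpha:
  assumes "A \<subseteq> topspace T" "finite A" "A \<noteq> {}"
  shows "eta (lowR T Q) (uppR T Q) A \<le> eta (lowAlpha T Q) (uppAlpha T Q) A"
proof (rule eta_le_eta_if_nested[OF _ _ _ _ assms(2,3)])
  have "lowR T Q A \<subseteq> lowR T Q (uppR T Q (lowR T Q A))"
    using lowR_subset_topspace by (rule lowR_subset_lowR_uppR) simp
  then show "lowR T Q A \<subseteq> lowAlpha T Q A"
    using lowR_subset unfolding lowAlpha_def by blast
  have "uppR T Q (lowR T Q (uppR T Q A)) \<subseteq> uppR T Q A"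
    using assms(1) lowR_subset by (rule uppR_lowR_subset_uppR)
  then show "uppAlpha T Q A \<subseteq> uppR T Q A"
    using uppR_superset[OF assms(1)] unfolding uppAlpha_def by blast
qed (auto simp: lowAlpha_def uppAlpha_def)

lemma eta_lowR_uppR_le_eta_P:
  assumes "A \<subseteq> topspace T" "finite A" "A \<noteq> {}"
  shows "eta (lowR T Q) (uppR T Q) A \<le> eta (lowP T Q) (uppP T Q) A"
proof (rule eta_le_eta_if_nested[OF _ _ _ _ assms(2,3)])
  have "lowR T Q A \<subseteq> lowR T Q (uppR T Q A)"
    using assms(1) lowR_subset by (rule lowR_subset_lowR_uppR)
  then show "lowR T Q A \<subseteq> lowP T Q A"
    using lowR_subset unfolding lowP_def by blast
  have "uppR T Q (lowR T Q A) \<subseteq> uppR T Q A"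
    using assms(1) lowR_subset uppR_superset[OF assms(1)]
    by (intro uppR_lowR_subset_uppR) auto
  then show "uppP T Q A \<subseteq> uppR T Q A"
    using uppR_superset[OF assms(1)] unfolding uppP_def by blast
qed (auto simp: lowP_def uppP_def)

end

lemma union_inter_closed_increasing:
  "topspace T = U \<Longrightarrow> union_inter_closed T (is_increasing U \<rho>)"
  by unfold_locales (auto simp: is_increasing_def)

lemma union_inter_closed_decreasing:
  "topspace T = U \<Longrightarrow> union_inter_closed T (is_decreasing U \<rho>)"
  by unfold_locales (auto simp: is_decreasing_def)

theorem proposition3p17:
  fixes U :: "'a set" and T :: "'a topology" and \<rho> :: "'a rel" and A :: "'a set"
  assumes "U \<noteq> {}"
    and "topspace T = U"
    and "partial_order_on U \<rho>"
    and "A \<subseteq> U" and "A \<noteq> {}" and "finite A"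
  shows "eta (lowR T (is_increasing U \<rho>)) (uppR T (is_increasing U \<rho>)) A
           \<le> eta (lowAlpha T (is_increasing U \<rho>)) (uppAlpha T (is_increasing U \<rho>)) A
       \<and> eta (lowR T (is_decreasing U \<rho>)) (uppR T (is_decreasing U \<rho>)) A
           \<le> eta (lowAlpha T (is_decreasing U \<rho>)) (uppAlpha T (is_decreasing U \<rho>)) A
       \<and> eta (lowR T (is_increasing U \<rho>)) (uppR T (is_increasing U \<rho>)) A
           \<le> eta (lowP T (is_increasing U \<rho>)) (uppP T (is_increasing U \<rho>)) A
       \<and> eta (lowR T (is_decreasing U \<rho>)) (uppR T (is_decreasing U \<rho>)) A
           \<le> eta (lowP T (is_decreasing U \<rho>)) (uppP T (is_decreasing U \<rho>)) A"
proof -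
  have A: "A \<subseteq> topspace T" "finite A" "A \<noteq> {}"
    using assms by auto
  interpret inc: union_inter_closed T "is_increasing U \<rho>"
    using assms(2) by (rule union_inter_closed_increasing)
  interpret dec: union_inter_closed T "is_decreasing U \<rho>"
    using assms(2) by (rule union_inter_closed_decreasing)
  show ?thesis
    using inc.eta_lowR_uppR_le_eta_alpha[OF A] dec.eta_lowR_uppR_le_eta_alpha[OF A]
      inc.eta_lowR_uppR_le_eta_P[OF A] dec.eta_lowR_uppR_le_eta_P[OF A]
    by blast
qed

end
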